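(* Let $u$ be a partition with $\omega(u)=n$, and suppose $\dot n=n-u_1-3u_3>0$. Then $v_2(\tau_u)\ge u_3+\lceil\frac{1}{2}\dot n\rceil-1$, except when $\dot n=7u_7$, in which case $v_2(\tau_u)\ge u_3+\lceil\frac12\dot n\rceil-3$.
   Context: A partition is a sequence $u=(u_1,u_2,\dots)$ of nonnegative integers, almost all zero ($u_i$ = number of parts equal to $i$); weight $\omega(u)=\sum_i iu_i$, degree $d(u)=\sum_i u_i$. For a partition $u$ of weight $n\ge1$ with degree $d$, $\gamma_u=\prod_{i\ge1}(i+1)^{u_i}u_i!$ and $\tau_u=(-1)^{d-1}\frac{(n+d-2)!}{\gamma_u}$. $v_2$ is the $2$-adic valuation and $\lceil x\rceil$ is the least integer $\ge x$. *)

theory Defs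
  imports Complex_Main "HOL-Computational_Algebra.Primes"
begin

text \<open>A partition is a finitely supported sequence u : nat => nat, where u i (i >= 1)
  is the number of parts equal to i; the entry u 0 is required to be 0.\<close>
definition is_partition :: "(nat \<Rightarrow> nat) \<Rightarrow> bool" where
  "is_partition u \<longleftrightarrow> u 0 = 0 \<and> finite {i. u i \<noteq> 0}"

definition supp :: "(nat \<Rightarrow> nat) \<Rightarrow> nat set" where
  "supp u = {i. i \<ge> 1 \<and> u i \<noteq> 0}"

definition weight :: "(nat \<Rightarrow> nat) \<Rightarrow> nat" where
  "weight u = (\<Sum>i\<in>supp u. i * u i)"

definition degree :: "(nat \<Rightarrow> nat) \<Rightarrow> nat" where
  "degree u = (\<Sum>i\<in>supp u. u i)"

definition gamma :: "(nat \<Rightarrow> nat) \<Rightarrow> nat" where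
  "gamma u = (\<Prod>i\<in>supp u. (i + 1) ^ u i * fact (u i))"

definition tau :: "(nat \<Rightarrow> nat) \<Rightarrow> rat" where
  "tau u = (-1) ^ (degree u - 1) * of_nat (fact (weight u + degree u - 2)) / of_nat (gamma u)"

definition v2 :: "rat \<Rightarrow> int" where
  "v2 q = (case quotient_of q of (a, b) \<Rightarrow>
            int (multiplicity (2::int) a) - int (multiplicity (2::int) b))"

end

theory Submission
  imports Defs
begin

(* Write s(m) for the binary digit sum of m. Legendre's formula v2(m!) = m - s(m) turns
   v2(tau_u), with N = n + d - 2, into n - 2 - s(N) - sum_i u_i v2(i + 1) + sum_i s(u_i), and the
   claim into a digit-sum inequality: with slack g_i = i - 2 v2(i + 1) for i not in {1, 3} and
   g_1 = g_3 = 0, one needs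

     2 s(sum_i u_i (i + 1) - 2) + 2 <= sum_i (u_i g_i + 2 s(u_i))   (+ 4 in the exceptional case).

   Subadditivity and submultiplicativity of s give 2 s(k (i + 1)) <= k g_i + 2 s(k) for every
   part i, since 2 s(i + 1) <= g_i + 2. The "- 2" is absorbed by one part j outside {1, 3}, which
   exists because the reduced weight is positive; this succeeds except for j = 7, where j + 1 = 8
   has valuation 3 and leaves slack 1 only, and the exception is paid for by the extra 4. *)

fun bitsum :: "nat \<Rightarrow> nat" where
  "bitsum n = (if n = 0 then 0 else n mod 2 + bitsum (n div 2))"

declare bitsum.simps [simp del]

lemma bitsum_0 [simp]: "bitsum 0 = 0"
  by (simp add: bitsum.simps)

lemma bitsum_double [simp]: "bitsum (2 * n) = bitsum n"
  by (subst bitsum.simps) auto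

lemma bitsum_Suc_double [simp]: "bitsum (Suc (2 * n)) = Suc (bitsum n)"
  by (subst bitsum.simps) auto

lemma bitsum_pow2_mult [simp]: "bitsum (2 ^ a * n) = bitsum n"
  by (induction a) (simp_all add: mult.assoc)

lemma bitsum_le: "bitsum n \<le> n"
  by (induction n rule: nat_bit_induct) simp_all

text \<open>For evaluation at numerals only: on a symbolic argument, rewriting with it does not terminate.\<close>
lemma multiplicity_2_nat_eval:
  "multiplicity (2::nat) n = (if n = 0 \<or> odd n then 0 else Suc (multiplicity 2 (n div 2)))"
proof (cases "n = 0 \<or> odd n")
  case True
  then show ?thesis
    by (auto intro: not_dvd_imp_multiplicity_0)
next
  case False
  then obtain k where "n = 2 * k" "0 < k"
    by auto
  then show ?thesis
    by (simp add: multiplicity_times_same)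
qed

lemma multiplicity_2_Suc_double [simp]: "multiplicity (2::nat) (Suc (2 * n)) = 0"
  by (rule not_dvd_imp_multiplicity_0) simp

lemma multiplicity_2_mult:
  "0 < x \<Longrightarrow> 0 < y \<Longrightarrow> multiplicity (2::nat) (x * y) = multiplicity 2 x + multiplicity 2 y"
  by (simp add: prime_elem_multiplicity_mult_distrib)

lemma multiplicity_2_pow2_mult:
  "0 < x \<Longrightarrow> multiplicity (2::nat) (2 ^ a * x) = a + multiplicity 2 x"
  by (simp add: multiplicity_2_mult)

lemma bitsum_Suc: "bitsum (Suc n) + multiplicity 2 (Suc n) = Suc (bitsum n)"
proof (induction n rule: nat_bit_induct)
  case zero
  show ?case
    by (simp add: bitsum.simps)
next
  case (even n)
  show ?case
    by simp
next
  case (odd n)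
  have "Suc (Suc (2 * n)) = 2 * Suc n"
    by simp
  moreover have "multiplicity 2 (2 * Suc n) = Suc (multiplicity 2 (Suc n))"
    by (rule multiplicity_times_same) simp_all
  ultimately show ?case
    using odd.IH by (simp only: bitsum_double bitsum_Suc_double)
qed

lemma legendre_multiplicity_2_fact: "multiplicity 2 (fact n :: nat) + bitsum n = n"
proof (induction n)
  case 0
  show ?case
    by simp
next
  case (Suc n)
  have "multiplicity 2 (fact (Suc n) :: nat) = multiplicity 2 (Suc n) + multiplicity 2 (fact n :: nat)"
    unfolding fact_Suc of_nat_id by (rule multiplicity_2_mult) simp_all
  then show ?case
    using Suc.IH bitsum_Suc[of n] by simp
qed

text \<open>Subadditivity is the integrality of \<open>(x + y) choose x\<close>, read through Legendre's formula.\<close>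
lemma bitsum_add: "bitsum (x + y) \<le> bitsum x + bitsum y"
proof -
  have "multiplicity 2 (fact x * fact y :: nat) \<le> multiplicity 2 (fact (x + y) :: nat)"
    by (rule dvd_imp_multiplicity_le) (simp_all add: fact_fact_dvd_fact)
  then have "multiplicity 2 (fact x :: nat) + multiplicity 2 (fact y :: nat)
      \<le> multiplicity 2 (fact (x + y) :: nat)"
    by (simp add: multiplicity_2_mult)
  then show ?thesis
    using legendre_multiplicity_2_fact[of x] legendre_multiplicity_2_fact[of y]
      legendre_multiplicity_2_fact[of "x + y"] by linarith
qed

lemma bitsum_sum: "bitsum (\<Sum>i\<in>S. f i) \<le> (\<Sum>i\<in>S. bitsum (f i))"
proof (induction S rule: infinite_finite_induct)
  case (insert x F)
  then show ?case
    using bitsum_add[of "f x" "sum f F"] by simp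
qed simp_all

lemma bitsum_mult: "bitsum (a * b) \<le> bitsum a * bitsum b"
proof (induction a rule: nat_bit_induct)
  case (odd a)
  have "bitsum (Suc (2 * a) * b) = bitsum (2 * (a * b) + b)"
    by (simp add: algebra_simps)
  also have "\<dots> \<le> bitsum (a * b) + bitsum b"
    using bitsum_add[of "2 * (a * b)" b] by simp
  finally show ?case
    using odd.IH by simp
qed (simp_all add: mult.assoc)

lemma bitsum_pred: "0 < x \<Longrightarrow> bitsum (x - 1) + 1 = bitsum x + multiplicity 2 x"
  using bitsum_Suc[of "x - 1"] by simp

lemma bitsum_multiplicity_2_le: "0 < n \<Longrightarrow> 8 * (bitsum n + multiplicity 2 n) \<le> n + 24"
proof (induction n rule: less_induct)
  case (less n)
  show ?case
  proof (cases "n < 16")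
    case True
    then have "n = 1 \<or> n = 2 \<or> n = 3 \<or> n = 4 \<or> n = 5 \<or> n = 6 \<or> n = 7 \<or> n = 8 \<or> n = 9
        \<or> n = 10 \<or> n = 11 \<or> n = 12 \<or> n = 13 \<or> n = 14 \<or> n = 15"
      using less.prems by presburger
    then show ?thesis
      by (elim disjE) (simp_all add: bitsum.simps multiplicity_2_nat_eval)
  next
    case False
    obtain k where k: "n = 2 * k \<or> n = Suc (2 * k)"
      by (metis oddE evenE Suc_eq_plus1)
    with False have "8 \<le> k" "k < n"
      by auto
    with less.IH[of k] k show ?thesis
      by (auto simp: multiplicity_times_same)
  qed
qed

definition part_slack :: "nat \<Rightarrow> nat" where
  "part_slack i = (if i = 1 \<or> i = 3 then 0 else i - 2 * multiplicity 2 (i + 1))"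

lemma part_slack_estimates:
  fixes i :: nat
  defines "E \<equiv> if i = 7 then 4 else 0"
  assumes "2 \<le> i" "i \<noteq> 3"
  shows "0 < part_slack i" (is ?A)
    and "2 * bitsum (i + 1) \<le> part_slack i + 2" (is ?B)
    and "2 * bitsum (i - 1) \<le> part_slack i + E" (is ?C)
    and "2 * bitsum (i + 1) + 2 * multiplicity 2 (i + 1) \<le> 2 * part_slack i + 2 + E" (is ?D)
proof -
  have "?A \<and> ?B \<and> ?C \<and> ?D"
  proof (cases "i < 24")
    case True
    then have "i = 2 \<or> i = 4 \<or> i = 5 \<or> i = 6 \<or> i = 7 \<or> i = 8 \<or> i = 9 \<or> i = 10 \<or> i = 11
        \<or> i = 12 \<or> i = 13 \<or> i = 14 \<or> i = 15 \<or> i = 16 \<or> i = 17 \<or> i = 18 \<or> i = 19 \<or> i = 20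
        \<or> i = 21 \<or> i = 22 \<or> i = 23"
      using assms(2,3) by presburger
    then show ?thesis
      unfolding E_def part_slack_def
      by (elim disjE) (simp_all add: bitsum.simps multiplicity_2_nat_eval)
  next
    case False
    have s1: "8 * bitsum (i + 1) + 8 * multiplicity 2 (i + 1) \<le> i + 25"
      using bitsum_multiplicity_2_le[of "i + 1"] by simp
    have s0: "8 * bitsum (i - 1) \<le> i + 23"
      using bitsum_multiplicity_2_le[of "i - 1"] False by simp
    have slack: "part_slack i + 2 * multiplicity 2 (i + 1) = i"
      using s1 False by (simp add: part_slack_def)
    have "E = 0"
      using False by (simp add: E_def)
    show ?thesis
    proof (intro conjI)
      show ?A ?B
        using s1 slack False by linarith+
      show ?C ?D
        using s1 s0 slack False \<open>E = 0\<close> by linarith+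
    qed
  qed
  then show ?A ?B ?C ?D
    by blast+
qed

lemma bitsum_mult_part_le:
  assumes "1 \<le> i"
  shows "2 * bitsum (k * (i + 1)) \<le> k * part_slack i + 2 * bitsum k"
proof (cases "i = 1 \<or> i = 3")
  case True
  then have "k * (i + 1) = 2 ^ (if i = 1 then 1 else 2) * k"
    by auto
  then have "bitsum (k * (i + 1)) = bitsum k"
    by (simp only: bitsum_pow2_mult)
  then show ?thesis
    using True by (simp add: part_slack_def)
next
  case False
  with assms have i: "2 \<le> i" "i \<noteq> 3"
    by auto
  have "2 * bitsum (k * (i + 1)) \<le> bitsum k * (2 * bitsum (i + 1))"
    using bitsum_mult[of k "i + 1"] by simp
  also have "\<dots> \<le> bitsum k * (part_slack i + 2)"
    using part_slack_estimates(2)[OF i] by (rule mult_le_mono2)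
  also have "\<dots> \<le> k * part_slack i + 2 * bitsum k"
    using mult_le_mono1[OF bitsum_le[of k], of "part_slack i"] by (simp add: algebra_simps)
  finally show ?thesis .
qed

lemma add_le_pow2_mult: "0 < g \<Longrightarrow> b + g \<le> 2 ^ b * (g::nat)"
proof (induction b)
  case (Suc b)
  have "1 \<le> 2 ^ b * g"
    using Suc.prems by simp
  moreover have "2 ^ Suc b * g = 2 * (2 ^ b * g)"
    by simp
  ultimately show ?case
    using Suc.IH Suc.prems by linarith
qed simp

lemma bitsum_pow2_mult_part_minus_2_le:
  fixes i :: nat
  defines "E \<equiv> if i = 7 then 4 else 0"
  assumes i: "2 \<le> i" "i \<noteq> 3"
  shows "2 * bitsum (2 ^ a * (i + 1) - 2) \<le> 2 ^ a * part_slack i + E"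
proof (cases a)
  case 0
  then show ?thesis
    using part_slack_estimates(3)[OF i] by (simp add: E_def)
next
  case (Suc b)
  define x where "x = 2 ^ b * (i + 1)"
  have "0 < x"
    by (simp add: x_def)
  have "2 ^ a * (i + 1) - 2 = 2 * (x - 1)"
    by (simp add: Suc x_def diff_mult_distrib2)
  then have "bitsum (2 ^ a * (i + 1) - 2) + 1 = bitsum x + multiplicity 2 x"
    using bitsum_pred[OF \<open>0 < x\<close>] by simp
  also have "\<dots> = bitsum (i + 1) + b + multiplicity 2 (i + 1)"
  proof -
    have "multiplicity 2 x = b + multiplicity 2 (i + 1)"
      unfolding x_def by (rule multiplicity_2_pow2_mult) simp
    moreover have "bitsum x = bitsum (i + 1)"
      unfolding x_def by (rule bitsum_pow2_mult)
    ultimately show ?thesis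
      by simp
  qed
  finally have "bitsum (2 ^ a * (i + 1) - 2) + 1 = bitsum (i + 1) + b + multiplicity 2 (i + 1)" .
  moreover have "b + part_slack i \<le> 2 ^ b * part_slack i"
    using part_slack_estimates(1)[OF i] by (rule add_le_pow2_mult)
  moreover have "2 ^ a * part_slack i = 2 * (2 ^ b * part_slack i)"
    using Suc by simp
  ultimately show ?thesis
    using part_slack_estimates(4)[OF i] unfolding E_def by linarith
qed

lemma bitsum_mult_part_minus_2_le:
  fixes i :: nat
  defines "E \<equiv> if i = 7 then 4 else 0"
  assumes i: "2 \<le> i" "i \<noteq> 3" and "0 < k"
  shows "2 * bitsum (k * (i + 1) - 2) + 2 \<le> k * part_slack i + 2 * bitsum k + E"
proof -
  define g where "g = part_slack i"
  define a where "a = multiplicity 2 k"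
  obtain y where "k = 2 ^ a * y" "odd y"
    using multiplicity_decompose'[of k "2::nat"] \<open>0 < k\<close> unfolding a_def by auto
  then obtain b where k: "k = 2 ^ a * (2 * b + 1)"
    by (auto elim: oddE)
  have "1 * 3 \<le> 2 ^ a * (i + 1)"
    by (rule mult_le_mono) (use i in simp_all)
  moreover have "k * (i + 1) = 2 ^ Suc a * (b * (i + 1)) + 2 ^ a * (i + 1)"
    unfolding k by (simp add: algebra_simps)
  ultimately have "k * (i + 1) - 2 = 2 ^ Suc a * (b * (i + 1)) + (2 ^ a * (i + 1) - 2)"
    by linarith
  then have "bitsum (k * (i + 1) - 2) \<le> bitsum (b * (i + 1)) + bitsum (2 ^ a * (i + 1) - 2)"
    using bitsum_add[of "2 ^ Suc a * (b * (i + 1))" "2 ^ a * (i + 1) - 2"]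
    by (simp only: bitsum_pow2_mult)
  moreover have "2 * bitsum (b * (i + 1)) \<le> b * g + 2 * bitsum b"
    unfolding g_def using i by (intro bitsum_mult_part_le) simp
  moreover have "2 * bitsum (2 ^ a * (i + 1) - 2) \<le> 2 ^ a * g + E"
    unfolding g_def E_def using i by (rule bitsum_pow2_mult_part_minus_2_le)
  moreover have "bitsum k = bitsum b + 1"
    unfolding k bitsum_pow2_mult by simp
  moreover have "b * g \<le> 2 ^ Suc a * (b * g)"
    using mult_le_mono1[of 1 "2 ^ Suc a" "b * g"] by simp
  moreover have "k * g = 2 ^ Suc a * (b * g) + 2 ^ a * g"
    unfolding k by (simp add: algebra_simps)
  ultimately show ?thesis
    unfolding g_def by linarith
qed

lemma bitsum_sum_parts_minus_2_le:
  fixes u :: "nat \<Rightarrow> nat" and j :: nat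
  defines "E \<equiv> if j = 7 then 4 else 0"
  assumes S: "finite S" "\<And>i. i \<in> S \<Longrightarrow> 1 \<le> i"
    and j: "j \<in> S" "2 \<le> j" "j \<noteq> 3" "0 < u j"
  shows "2 * bitsum ((\<Sum>i\<in>S. u i * (i + 1)) - 2) + 2
    \<le> (\<Sum>i\<in>S. u i * part_slack i + 2 * bitsum (u i)) + E"
proof -
  define R where "R = S - {j}"
  have "1 * 3 \<le> u j * (j + 1)"
    by (rule mult_le_mono) (use j in simp_all)
  moreover have "(\<Sum>i\<in>S. u i * (i + 1)) = u j * (j + 1) + (\<Sum>i\<in>R. u i * (i + 1))"
    using sum.remove[OF S(1) j(1), of "\<lambda>i. u i * (i + 1)"] R_def by simp
  ultimately have split: "(\<Sum>i\<in>S. u i * (i + 1)) - 2 = (u j * (j + 1) - 2) + (\<Sum>i\<in>R. u i * (i + 1))"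
    by linarith
  have "bitsum ((\<Sum>i\<in>S. u i * (i + 1)) - 2)
      \<le> bitsum (u j * (j + 1) - 2) + bitsum (\<Sum>i\<in>R. u i * (i + 1))"
    unfolding split by (rule bitsum_add)
  also have "\<dots> \<le> bitsum (u j * (j + 1) - 2) + (\<Sum>i\<in>R. bitsum (u i * (i + 1)))"
    using bitsum_sum[of "\<lambda>i. u i * (i + 1)" R] by simp
  finally have "bitsum ((\<Sum>i\<in>S. u i * (i + 1)) - 2)
      \<le> bitsum (u j * (j + 1) - 2) + (\<Sum>i\<in>R. bitsum (u i * (i + 1)))" .
  moreover have "2 * (\<Sum>i\<in>R. bitsum (u i * (i + 1)))
      \<le> (\<Sum>i\<in>R. u i * part_slack i + 2 * bitsum (u i))"
    unfolding sum_distrib_left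
    by (rule sum_mono) (use bitsum_mult_part_le S(2) R_def in auto)
  moreover have "2 * bitsum (u j * (j + 1) - 2) + 2 \<le> u j * part_slack j + 2 * bitsum (u j) + E"
    unfolding E_def using j(2-4) by (rule bitsum_mult_part_minus_2_le)
  moreover have "(\<Sum>i\<in>S. u i * part_slack i + 2 * bitsum (u i))
      = u j * part_slack j + 2 * bitsum (u j) + (\<Sum>i\<in>R. u i * part_slack i + 2 * bitsum (u i))"
    using sum.remove[OF S(1) j(1), of "\<lambda>i. u i * part_slack i + 2 * bitsum (u i)"] R_def
    by simp
  ultimately show ?thesis
    by linarith
qed

lemma part_slack_add_multiplicity_2:
  assumes "1 \<le> i"
  shows "part_slack i + 2 * multiplicity 2 (i + 1) = i + (if i = 1 \<or> i = 3 then 1 else 0)"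
proof (cases "i = 1 \<or> i = 3")
  case True
  then show ?thesis
    by (elim disjE) (simp_all add: part_slack_def multiplicity_2_nat_eval)
next
  case False
  with assms part_slack_estimates(1)[of i] show ?thesis
    by (simp add: part_slack_def)
qed

lemma supp_ge_1: "i \<in> supp u \<Longrightarrow> 1 \<le> i"
  by (simp add: supp_def)

lemma notin_supp_eq_0: "1 \<le> i \<Longrightarrow> i \<notin> supp u \<Longrightarrow> u i = 0"
  by (simp add: supp_def)

lemma finite_supp: "is_partition u \<Longrightarrow> finite (supp u)"
  unfolding is_partition_def supp_def by (auto elim: rev_finite_subset)

lemma weight_eq_sum: "finite T \<Longrightarrow> supp u \<subseteq> T \<Longrightarrow> weight u = (\<Sum>i\<in>T. i * u i)"
  unfolding weight_def by (rule sum.mono_neutral_left) (auto simp: supp_def)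

lemma sum_supp_parts_Suc: "(\<Sum>i\<in>supp u. u i * (i + 1)) = weight u + degree u"
  by (simp add: weight_def degree_def sum.distrib algebra_simps)

lemma sum_supp_part_slack:
  assumes "finite (supp u)"
  shows "(\<Sum>i\<in>supp u. u i * part_slack i) + 2 * (\<Sum>i\<in>supp u. u i * multiplicity 2 (i + 1))
    = weight u + u 1 + u 3"
proof -
  have part: "u i * part_slack i + 2 * (u i * multiplicity 2 (i + 1))
      = i * u i + (if i = 1 then u i else 0) + (if i = 3 then u i else 0)" if "i \<in> supp u" for i
  proof -
    have "u i * part_slack i + 2 * (u i * multiplicity 2 (i + 1))
        = u i * (part_slack i + 2 * multiplicity 2 (i + 1))"
      by (simp add: algebra_simps)
    also have "\<dots> = u i * (i + (if i = 1 \<or> i = 3 then 1 else 0))"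
      by (simp only: part_slack_add_multiplicity_2[OF supp_ge_1[OF that]])
    finally show ?thesis
      by auto
  qed
  have "(\<Sum>i\<in>supp u. u i * part_slack i) + 2 * (\<Sum>i\<in>supp u. u i * multiplicity 2 (i + 1))
      = (\<Sum>i\<in>supp u. i * u i + (if i = 1 then u i else 0) + (if i = 3 then u i else 0))"
    unfolding sum_distrib_left sum.distrib[symmetric] using part by (rule sum.cong[OF refl])
  also have "\<dots> = weight u + u 1 + u 3"
    using assms notin_supp_eq_0[of 1 u] notin_supp_eq_0[of 3 u]
    by (simp add: sum.distrib weight_def sum.delta)
  finally show ?thesis .
qed

lemma multiplicity_2_gamma:
  assumes "finite (supp u)"
  shows "multiplicity 2 (gamma u) + (\<Sum>i\<in>supp u. bitsum (u i))
    = (\<Sum>i\<in>supp u. u i * multiplicity 2 (i + 1)) + degree u"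
proof -
  have "multiplicity 2 (gamma u) = (\<Sum>i\<in>supp u. multiplicity 2 ((i + 1) ^ u i * fact (u i) :: nat))"
    unfolding gamma_def by (rule prime_elem_multiplicity_prod_distrib) (use assms in auto)
  also have "\<dots> = (\<Sum>i\<in>supp u. u i * multiplicity 2 (i + 1) + multiplicity 2 (fact (u i) :: nat))"
    by (rule sum.cong) (simp_all add: multiplicity_2_mult prime_elem_multiplicity_power_distrib)
  finally show ?thesis
    by (simp add: degree_def sum.distrib[symmetric] add.assoc legendre_multiplicity_2_fact)
qed

lemma multiplicity_2_int: "multiplicity (2::int) (int n) = multiplicity 2 n"
proof (cases "n = 0")
  case False
  have dvd_iff: "(2::int) ^ k dvd int n \<longleftrightarrow> 2 ^ k dvd n" for k
    by (metis int_dvd_int_iff of_nat_numeral of_nat_power)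
  show ?thesis
  proof (rule multiplicity_eqI)
    show "2 ^ multiplicity 2 n dvd int n"
      unfolding dvd_iff by (rule multiplicity_dvd)
    show "\<not> 2 ^ Suc (multiplicity 2 n) dvd int n"
      unfolding dvd_iff using False by (simp add: power_dvd_iff_le_multiplicity del: power_Suc)
  qed
qed simp

lemma v2_of_int_div:
  assumes "a \<noteq> 0" "b \<noteq> 0"
  shows "v2 (of_int a / of_int b) = int (multiplicity 2 a) - int (multiplicity 2 b)"
proof -
  obtain p r where pr: "quotient_of (of_int a / of_int b) = (p, r)"
    by (cases "quotient_of (of_int a / of_int b)") auto
  have "0 < r"
    using quotient_of_denom_pos[OF pr] .
  have "(of_int a / of_int b :: rat) = of_int p / of_int r"
    using quotient_of_div[OF pr] .
  then have "a * r = p * b"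
    using assms \<open>0 < r\<close> by (simp add: field_simps flip: of_int_mult)
  moreover have "p \<noteq> 0"
    using \<open>a * r = p * b\<close> assms \<open>0 < r\<close> by auto
  ultimately have "multiplicity (2::int) a + multiplicity 2 r = multiplicity 2 p + multiplicity 2 b"
    using assms \<open>0 < r\<close> by (simp flip: prime_elem_multiplicity_mult_distrib)
  then show ?thesis
    unfolding v2_def pr by simp
qed

lemma v2_tau:
  "v2 (tau u) = int (multiplicity 2 (fact (weight u + degree u - 2) :: nat))
    - int (multiplicity 2 (gamma u))"
proof -
  define N where "N = weight u + degree u - 2"
  have "0 < gamma u"
    unfolding gamma_def by (rule prod_pos) simp
  have "tau u = of_int ((-1) ^ (degree u - 1) * int (fact N)) / of_int (int (gamma u))"
    by (simp add: tau_def N_def)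
  then have "v2 (tau u) = int (multiplicity 2 ((-1) ^ (degree u - 1) * int (fact N)))
      - int (multiplicity 2 (int (gamma u)))"
    by (simp only:) (rule v2_of_int_div, use \<open>0 < gamma u\<close> in simp_all)
  then show ?thesis
    unfolding N_def[symmetric]
    by (simp add: multiplicity_times_unit_right is_unit_power_iff multiplicity_2_int del: of_nat_fact)
qed

lemma v2_tau_lower_bound:
  assumes u: "is_partition u" and j: "j \<in> supp u" "j \<noteq> 1" "j \<noteq> 3"
  shows "int (weight u) - int (u 1) - 3 * int (u 3)
    \<le> 2 * (v2 (tau u) - int (u 3) + 1) + (if j = 7 then 4 else 0)"
proof -
  define N where "N = weight u + degree u - 2"
  have fin: "finite (supp u)"
    using finite_supp[OF u] .
  have "2 \<le> j" "0 < u j"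
    using j supp_ge_1[OF j(1)] by (auto simp: supp_def)
  have "1 * 3 \<le> u j * (j + 1)"
    by (rule mult_le_mono) (use \<open>2 \<le> j\<close> \<open>0 < u j\<close> in simp_all)
  also have "\<dots> \<le> weight u + degree u"
    using member_le_sum[OF j(1), of "\<lambda>i. u i * (i + 1)"] fin sum_supp_parts_Suc[of u] by simp
  finally have N: "N + 2 = weight u + degree u"
    by (simp add: N_def)
  have "2 * bitsum N + 2
      \<le> (\<Sum>i\<in>supp u. u i * part_slack i + 2 * bitsum (u i)) + (if j = 7 then 4 else 0)"
    using bitsum_sum_parts_minus_2_le[of "supp u" j u, OF fin supp_ge_1[of _ u] j(1) \<open>2 \<le> j\<close> j(3) \<open>0 < u j\<close>]
    unfolding sum_supp_parts_Suc N_def .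
  moreover have "(\<Sum>i\<in>supp u. u i * part_slack i + 2 * bitsum (u i))
      = (\<Sum>i\<in>supp u. u i * part_slack i) + 2 * (\<Sum>i\<in>supp u. bitsum (u i))"
    by (simp add: sum.distrib sum_distrib_left)
  moreover have "(if j = 7 then 4 else 0) = int (if j = 7 then 4 else 0)"
    by simp
  ultimately show ?thesis
    using legendre_multiplicity_2_fact[of N] multiplicity_2_gamma[OF fin]
      sum_supp_part_slack[OF fin] v2_tau[of u] N
    unfolding N_def[symmetric] distrib_left right_diff_distrib by linarith
qed

theorem lemma4p7:
  fixes u :: "nat \<Rightarrow> nat" and n :: nat
  assumes "is_partition u"
    and "weight u = n"
    and "int n - int (u 1) - 3 * int (u 3) > 0"
  shows "(int n - int (u 1) - 3 * int (u 3) = 7 * int (u 7) \<longrightarrow>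
            v2 (tau u) \<ge> int (u 3) + \<lceil>of_int (int n - int (u 1) - 3 * int (u 3)) / (2::rat)\<rceil> - 3)
       \<and> (int n - int (u 1) - 3 * int (u 3) \<noteq> 7 * int (u 7) \<longrightarrow>
            v2 (tau u) \<ge> int (u 3) + \<lceil>of_int (int n - int (u 1) - 3 * int (u 3)) / (2::rat)\<rceil> - 1)"
proof -
  define D where "D = int n - int (u 1) - 3 * int (u 3)"
  have bound: "D \<le> 2 * (v2 (tau u) - int (u 3) + 1) + (if j = 7 then 4 else 0)"
    if "j \<in> supp u" "j \<noteq> 1" "j \<noteq> 3" for j
    using v2_tau_lower_bound[OF assms(1) that] assms(2) by (simp add: D_def)
  have outside: "\<exists>j\<in>supp u. j \<notin> T" if "finite T" "weight u \<noteq> (\<Sum>i\<in>T. i * u i)" for T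
    using weight_eq_sum[OF that(1)] that(2) by blast
  have ceiling_half: "\<lceil>of_int D / (2::rat)\<rceil> \<le> Y" if "D \<le> 2 * Y" for Y
    using that by (simp add: ceiling_le_iff divide_le_eq flip: of_int_mult)
  show ?thesis
    unfolding D_def[symmetric]
  proof (intro conjI impI)
    obtain j where j: "j \<in> supp u" "j \<noteq> 1" "j \<noteq> 3"
      using outside[of "{1, 3}"] assms(2,3) by auto
    have "(if j = 7 then 4 else 0) \<le> (4::int)"
      by simp
    with bound[OF j] have "D \<le> 2 * (v2 (tau u) - int (u 3) + 3)"
      unfolding distrib_left right_diff_distrib by linarith
    then show "int (u 3) + \<lceil>of_int D / (2::rat)\<rceil> - 3 \<le> v2 (tau u)"
      using ceiling_half by fastforce
  next
    assume "D \<noteq> 7 * int (u 7)"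
    then obtain j where j: "j \<in> supp u" "j \<noteq> 1" "j \<noteq> 3" "j \<noteq> 7"
      using outside[of "{1, 3, 7}"] assms(2) by (auto simp: D_def)
    then have "D \<le> 2 * (v2 (tau u) - int (u 3) + 1)"
      using bound[OF j(1-3)] by simp
    then show "int (u 3) + \<lceil>of_int D / (2::rat)\<rceil> - 1 \<le> v2 (tau u)"
      using ceiling_half by fastforce
  qed
qed

end
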